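(* Let $n\ge 2$ and for $R>0$ let $\mathcal{B}_n(R)$ be the set of bi-Perron algebraic units $\lambda\le R$ whose characteristic polynomial has degree at most $2n$. Then $|\mathcal{B}_n(R)|\sim R^{n(n+1)/2}$.
   Context: An algebraic integer $\lambda>1$ is bi-Perron if all its Galois conjugates lie in the annulus $\{z\in\mathbb{C}:1/\lambda\le|z|\le\lambda\}$. The characteristic polynomial of a bi-Perron algebraic unit $\lambda$ is the monic palindromic integer polynomial of lowest degree having $\lambda$ as its leading root. For positive functions $f,g$, $f\sim g$ means there is a constant $C>0$ with $\frac1C f(R)\le g(R)\le Cf(R)$ for all sufficiently large $R$. $|A|$ denotes the cardinality of a finite set $A$. *)

theory Defs
  imports "HOL-Analysis.Analysis" "HOL-Computational_Algebra.Polynomial"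
begin

definition ipoly :: "int poly \<Rightarrow> 'a::{comm_ring_1} \<Rightarrow> 'a" where
  "ipoly p x = poly (map_poly of_int p) x"

definition algebraic_integer_real :: "real \<Rightarrow> bool" where
  "algebraic_integer_real x \<longleftrightarrow> (\<exists>p. lead_coeff p = 1 \<and> ipoly p x = 0)"

definition algebraic_unit_real :: "real \<Rightarrow> bool" where
  "algebraic_unit_real x \<longleftrightarrow> algebraic_integer_real x \<and> algebraic_integer_real (1 / x)"

text \<open>z is a Galois conjugate of the algebraic number x iff z is a root of the minimal
  polynomial of x, i.e. z is a root of every integer polynomial vanishing at x.\<close>
definition galois_conjugate :: "real \<Rightarrow> complex \<Rightarrow> bool" where
  "galois_conjugate x z \<longleftrightarrow> (\<forall>p. ipoly p (complex_of_real x) = 0 \<longrightarrow> ipoly p z = 0)"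

definition bi_Perron :: "real \<Rightarrow> bool" where
  "bi_Perron x \<longleftrightarrow> x > 1 \<and> algebraic_integer_real x \<and>
     (\<forall>z. galois_conjugate x z \<longrightarrow> 1 / x \<le> cmod z \<and> cmod z \<le> x)"

definition palindromic :: "int poly \<Rightarrow> bool" where
  "palindromic p \<longleftrightarrow> (\<forall>i\<le>degree p. coeff p i = coeff p (degree p - i))"

definition monic_palindromic_leading :: "real \<Rightarrow> int poly \<Rightarrow> bool" where
  "monic_palindromic_leading x p \<longleftrightarrow> lead_coeff p = 1 \<and> palindromic p \<and> ipoly p x = 0 \<and>
     (\<forall>z::complex. ipoly p z = 0 \<longrightarrow> cmod z \<le> x)"

definition char_poly :: "real \<Rightarrow> int poly \<Rightarrow> bool" where
  "char_poly x p \<longleftrightarrow> monic_palindromic_leading x p \<and>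
     (\<forall>q. monic_palindromic_leading x q \<longrightarrow> degree p \<le> degree q)"

definition B :: "nat \<Rightarrow> real \<Rightarrow> real set" where
  "B n R = {x. bi_Perron x \<and> algebraic_unit_real x \<and> x \<le> R \<and>
              (\<exists>p. char_poly x p \<and> degree p \<le> 2 * n)}"

end

theory Submission
  imports Defs "Berlekamp_Zassenhaus.Factor_Bound"
begin

text \<open>
  Upper bound: every \<open>x \<in> B n R\<close> is the leading root of its characteristic polynomial, a monic
  palindromic integer polynomial of degree \<open>d \<le> 2n\<close> with all roots in the disc of radius \<open>R\<close>.
  Such a polynomial is determined by \<open>d\<close> and its coefficients \<open>c\<^sub>0, \<dots>, c\<^sub>n\<close>, and
  \<open>\<bar>c\<^sub>i\<bar> = \<bar>c\<^bsub>d-i\<^esub>\<bar> \<le> 4\<^sup>n R\<^sup>i\<close> as an elementary symmetric function of degree \<open>i\<close> in the roots.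
  Counting the possible coefficients gives \<open>O(R\<^bsup>n(n+1)/2\<^esup>)\<close>.

  Lower bound: if \<open>q(y) = y\<^sup>n + a\<^sub>1 y\<^bsup>n-1\<^esup> + \<dots> + a\<^sub>n\<close> has \<open>a\<^sub>1 \<approx> -R/2\<close> and \<open>\<bar>a\<^sub>k\<bar> \<le> \<epsilon> R\<^sup>k\<close> for
  \<open>k \<ge> 2\<close>, then \<open>q\<close> has a single large root \<open>y\<^sub>1 \<approx> R/2\<close>, which is real, and all other roots are
  small. The palindromic polynomial \<open>t\<^sup>n q(t + 1/t)\<close> then has as leading root the solution
  \<open>x > 1\<close> of \<open>x + 1/x = y\<^sub>1\<close>, so \<open>x \<in> B n R\<close>. There are \<open>\<asymp> R\<^bsup>n(n+1)/2\<^esup>\<close> admissible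
  \<open>(a\<^sub>1, \<dots>, a\<^sub>n)\<close> satisfying congruences that make \<open>q\<close> Eisenstein at \<open>2\<close>; irreducible monic
  polynomials with a common root coincide, so they give distinct elements of \<open>B n R\<close>.
\<close>

hide_const (open) up_ring.coeff up_ring.monom module.smult


lemma ipoly_of_real: "ipoly p (complex_of_real x) = complex_of_real (ipoly p x)"
proof -
  have "(map_poly of_int p :: complex poly) = map_poly of_real (map_poly of_int p :: real poly)"
    by (simp add: map_poly_map_poly o_def)
  then show ?thesis
    unfolding ipoly_def by (simp add: of_real_hom.poly_map_poly)
qed

lemma ipoly_cnj: "ipoly p (cnj z) = cnj (ipoly p z)"
proof -
  have "map_poly cnj (map_poly of_int p :: complex poly) = map_poly of_int p"
    by (simp add: map_poly_map_poly o_def)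
  then show ?thesis
    unfolding ipoly_def using poly_cnj[of "map_poly of_int p" z] by simp
qed

lemma ipoly_0: "ipoly p (0::'a::comm_ring_1) = of_int (coeff p 0)"
  unfolding ipoly_def by (simp add: poly_0_coeff_0)

lemma ipoly_altdef:
  "ipoly p (x::'a::{comm_ring_1,ring_char_0}) = (\<Sum>j\<le>degree p. of_int (coeff p j) * x ^ j)"
  unfolding ipoly_def poly_altdef by (simp add: of_int_hom.degree_map_poly_hom)

lemma monic_ipoly_factorization:
  fixes p :: "int poly"
  assumes "lead_coeff p = 1"
  obtains as :: "complex list"
  where "map_poly of_int p = (\<Prod>a\<leftarrow>as. [:-a, 1:])" "length as = degree p"
    "set as = {z. ipoly p z = 0}"
proof -
  obtain as :: "complex list" where
    as: "smult (lead_coeff (map_poly of_int p)) (\<Prod>a\<leftarrow>as. [:-a, 1:]) = map_poly of_int p"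
        "length as = degree (map_poly of_int p :: complex poly)"
    using fundamental_theorem_algebra_factorized by blast
  then have prod: "map_poly of_int p = (\<Prod>a\<leftarrow>as. [:-a, 1:])"
    and len: "length as = degree p"
    using assms by (simp_all add: of_int_hom.degree_map_poly_hom)
  have "ipoly p z = (\<Prod>a\<leftarrow>as. z - a)" for z
    unfolding ipoly_def prod by (induction as) (simp_all add: algebra_simps)
  then have "set as = {z. ipoly p z = 0}"
    by (auto simp: prod_list_zero_iff)
  with prod len show thesis by (rule that)
qed


subsection \<open>Palindromic polynomials\<close>

lemma palindromic_iff_reflect_poly: "palindromic p \<longleftrightarrow> reflect_poly p = p"
proof
  assume pal: "palindromic p"
  show "reflect_poly p = p"
  proof (rule poly_eqI)
    fix i
    show "coeff (reflect_poly p) i = coeff p i"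
    proof (cases "i \<le> degree p")
      case True
      then show ?thesis
        using pal[unfolded palindromic_def, rule_format, of i] by (simp add: coeff_reflect_poly)
    next
      case False
      then show ?thesis by (simp add: coeff_reflect_poly coeff_eq_0)
    qed
  qed
next
  assume "reflect_poly p = p"
  then show "palindromic p"
    unfolding palindromic_def by (metis coeff_reflect_poly diff_diff_cancel)
qed

lemma reflect_poly_of_int:
  "reflect_poly (map_poly of_int p :: 'a::{comm_ring_1,ring_char_0} poly) =
   map_poly of_int (reflect_poly p)"
  by (rule poly_eqI) (simp add: coeff_reflect_poly of_int_hom.degree_map_poly_hom)

lemma palindromic_root_inverse:
  fixes z :: "'a::field_char_0"
  assumes "palindromic p" "ipoly p z = 0" "z \<noteq> 0"
  shows "ipoly p (inverse z) = 0"
proof -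
  have "poly (reflect_poly (map_poly of_int p :: 'a poly)) z =
        z ^ degree (map_poly of_int p :: 'a poly) * ipoly p (inverse z)"
    unfolding ipoly_def using assms(3) by (rule poly_reflect_poly_nz)
  then show ?thesis
    using assms unfolding reflect_poly_of_int palindromic_iff_reflect_poly
    by (simp add: ipoly_def)
qed

lemma palindromic_coeff_0:
  assumes "palindromic p" "lead_coeff p = 1"
  shows "coeff p 0 = 1"
  using assms unfolding palindromic_def by (metis diff_zero le0)

text \<open>Both sides of the functional equation are polynomials in \<open>t\<close>, agreeing at infinitely many
  points.\<close>
lemma palindromic_if_ipoly_inverse:
  assumes "\<And>t::complex. t \<noteq> 0 \<Longrightarrow> ipoly p t = t ^ degree p * ipoly p (inverse t)"
  shows "palindromic p"
proof -
  define P where "P = (map_poly of_int p :: complex poly)"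
  have "poly (P - reflect_poly P) t = 0" if "t \<noteq> 0" for t
    using assms[OF that] poly_reflect_poly_nz[OF that, of P]
    unfolding P_def ipoly_def by (simp add: of_int_hom.degree_map_poly_hom)
  then have "- {0} \<subseteq> {t. poly (P - reflect_poly P) t = 0}" by auto
  moreover have "infinite (- {0::complex})"
    by (simp add: infinite_UNIV_char_0)
  ultimately have "P - reflect_poly P = 0"
    using poly_roots_finite finite_subset by blast
  then have "map_poly of_int (reflect_poly p) = (map_poly of_int p :: complex poly)"
    unfolding P_def reflect_poly_of_int by simp
  then show ?thesis
    unfolding palindromic_iff_reflect_poly by (rule of_int_poly_hom.injectivity)
qed


lemma leading_root_unique:
  assumes "monic_palindromic_leading x p" "monic_palindromic_leading y p"
  shows "x = y"
proof -
  have "ipoly p (complex_of_real x) = 0" "ipoly p (complex_of_real y) = 0"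
    using assms unfolding monic_palindromic_leading_def by (auto simp: ipoly_of_real)
  then have "cmod (complex_of_real x) \<le> y" "cmod (complex_of_real y) \<le> x"
    using assms unfolding monic_palindromic_leading_def by blast+
  then show ?thesis by simp
qed

lemma char_poly_exists:
  assumes "monic_palindromic_leading x p"
  obtains q where "char_poly x q" "degree q \<le> degree p"
proof -
  let ?deg = "\<lambda>d. \<exists>q. monic_palindromic_leading x q \<and> degree q = d"
  obtain q where q: "monic_palindromic_leading x q" "degree q = (LEAST d. ?deg d)"
    using LeastI[of ?deg "degree p"] assms by blast
  have "char_poly x q"
    unfolding char_poly_def using q Least_le[of ?deg] by auto
  moreover have "degree q \<le> degree p"
    using q(2) Least_le[of ?deg "degree p"] assms by auto
  ultimately show thesis by (rule that)
qed

lemma bi_Perron_if_leading_root: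
  assumes "x > 1" "monic_palindromic_leading x p"
  shows "bi_Perron x"
  unfolding bi_Perron_def
proof (intro conjI allI impI)
  have lc: "lead_coeff p = 1" and pal: "palindromic p" and root: "ipoly p x = 0"
    and lead: "\<And>z::complex. ipoly p z = 0 \<Longrightarrow> cmod z \<le> x"
    using assms(2) unfolding monic_palindromic_leading_def by auto
  show "x > 1" by fact
  show "algebraic_integer_real x"
    unfolding algebraic_integer_real_def using lc root by blast
  fix z assume "galois_conjugate x z"
  then have z: "ipoly p z = 0"
    using root unfolding galois_conjugate_def by (simp add: ipoly_of_real)
  then show "cmod z \<le> x" by (rule lead)
  have "z \<noteq> 0"
    using z palindromic_coeff_0[OF pal lc] by (auto simp: ipoly_0)
  then have "cmod (inverse z) \<le> x"
    using lead palindromic_root_inverse[OF pal z] by blast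
  then have "1 \<le> x * cmod z"
    using \<open>z \<noteq> 0\<close> by (simp add: norm_divide field_simps)
  then show "1 / x \<le> cmod z"
    using \<open>x > 1\<close> by (simp add: pos_divide_le_eq mult.commute)
qed

lemma algebraic_unit_if_leading_root:
  assumes "x \<noteq> 0" "monic_palindromic_leading x p"
  shows "algebraic_unit_real x"
proof -
  have "lead_coeff p = 1" "ipoly p x = 0" "ipoly p (inverse x) = 0"
    using assms palindromic_root_inverse[of p x]
    unfolding monic_palindromic_leading_def by auto
  then show ?thesis
    unfolding algebraic_unit_real_def algebraic_integer_real_def
    by (auto simp: divide_inverse)
qed

lemma mem_B_if_leading_root:
  assumes "1 < x" "x \<le> R" "monic_palindromic_leading x p" "degree p \<le> 2 * n"
  shows "x \<in> B n R"
proof -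
  obtain q where "char_poly x q" "degree q \<le> degree p"
    using char_poly_exists[OF assms(3)] .
  then show ?thesis
    unfolding B_def
    using assms bi_Perron_if_leading_root algebraic_unit_if_leading_root[of x p] by force
qed


subsection \<open>Upper bound\<close>

lemma norm_coeff_prod_linear_factors_le:
  fixes as :: "'a::real_normed_field list"
  assumes "\<forall>a\<in>set as. norm a \<le> M" "1 \<le> M"
  shows "norm (coeff (\<Prod>a\<leftarrow>as. [:-a, 1:]) i) \<le> 2 ^ length as * M ^ (length as - i)"
  using assms(1)
proof (induction as arbitrary: i)
  case Nil
  then show ?case by (cases i) auto
next
  case (Cons a as)
  define r where "r = (\<Prod>a\<leftarrow>as. [:-a, 1:])"
  define m where "m = length as"
  have IH: "norm (coeff r j) \<le> 2 ^ m * M ^ (m - j)" for j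
    using Cons unfolding r_def m_def by auto
  have a: "norm a \<le> M" using Cons.prems by auto
  have M: "0 \<le> M" using assms(2) by simp
  have prod: "(\<Prod>b\<leftarrow>a # as. [:-b, 1:]) = pCons 0 r - smult a r"
    unfolding r_def by (simp add: mult_pCons_left)
  show ?case
  proof (cases i)
    case 0
    have "norm a * norm (coeff r 0) \<le> M * (2 ^ m * M ^ m)"
      using IH[of 0] a M by (intro mult_mono) auto
    also have "\<dots> \<le> 2 ^ Suc m * M ^ Suc m"
      using M by simp
    finally show ?thesis
      unfolding prod 0 m_def by (simp add: norm_mult)
  next
    case (Suc j)
    have "norm (coeff r j - a * coeff r (Suc j)) \<le> norm (coeff r j) + norm a * norm (coeff r (Suc j))"
      using norm_triangle_ineq4[of "coeff r j" "a * coeff r (Suc j)"] by (simp add: norm_mult)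
    also have "\<dots> \<le> 2 ^ Suc m * M ^ (m - j)"
    proof (cases "j < m")
      case True
      then have "norm a * norm (coeff r (Suc j)) \<le> M * (2 ^ m * M ^ (m - Suc j))"
        using IH[of "Suc j"] a M by (intro mult_mono) auto
      also have "\<dots> = 2 ^ m * M ^ (m - j)"
        using True by (simp flip: Suc_diff_Suc)
      finally show ?thesis using IH[of j] by simp
    next
      case False
      have "degree r = m"
        unfolding r_def m_def using degree_linear_factors[of uminus as] by simp
      with False have "coeff r (Suc j) = 0"
        by (simp add: coeff_eq_0)
      then show ?thesis
        using IH[of j] False by (auto intro: order_trans)
    qed
    finally show ?thesis
      unfolding prod Suc m_def by simp
  qed
qed

text \<open>Up to sign, \<open>coeff p i\<close> is the elementary symmetric function of degree \<open>degree p - i\<close>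
  in the roots.\<close>
lemma coeff_bound_if_roots_bounded:
  fixes p :: "int poly"
  assumes "lead_coeff p = 1" "1 \<le> M" "\<And>z::complex. ipoly p z = 0 \<Longrightarrow> cmod z \<le> M"
  shows "\<bar>of_int (coeff p i)\<bar> \<le> 2 ^ degree p * M ^ (degree p - i)"
proof -
  obtain as :: "complex list" where P: "map_poly of_int p = (\<Prod>a\<leftarrow>as. [:-a, 1:])"
    and len: "length as = degree p" and roots: "set as = {z. ipoly p z = 0}"
    by (rule monic_ipoly_factorization[OF assms(1)])
  have "\<forall>a\<in>set as. cmod a \<le> M"
    using assms(3) roots by blast
  from norm_coeff_prod_linear_factors_le[OF this assms(2), of i] show ?thesis
    unfolding P[symmetric] len by simp
qed

lemma palindromic_eq_if_low_coeffs_eq: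
  assumes "palindromic p" "palindromic q" "degree p = degree q" "degree p \<le> 2 * n"
    and low: "\<And>i. i \<le> n \<Longrightarrow> coeff p i = coeff q i"
  shows "p = q"
proof (rule poly_eqI2)
  show "degree p = degree q" by fact
  fix i assume i: "i \<le> degree p"
  show "coeff p i = coeff q i"
  proof (cases "i \<le> n")
    case False
    then have "coeff p (degree p - i) = coeff q (degree q - i)"
      using low assms(3,4) by simp
    then show ?thesis
      using assms(1-3) i unfolding palindromic_def by metis
  qed (rule low)
qed

definition bounded_palindromics :: "nat \<Rightarrow> real \<Rightarrow> int poly set" where
  "bounded_palindromics n R = {p. lead_coeff p = 1 \<and> palindromic p \<and> degree p \<le> 2 * n \<and>
     (\<forall>z::complex. ipoly p z = 0 \<longrightarrow> cmod z \<le> R)}"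

lemma card_symmetric_int_interval_le:
  assumes "1 \<le> K"
  shows "real (card {-\<lfloor>K\<rfloor>..\<lfloor>K\<rfloor>}) \<le> 3 * K"
proof -
  have "real (card {-\<lfloor>K\<rfloor>..\<lfloor>K\<rfloor>}) = 2 * of_int \<lfloor>K\<rfloor> + 1"
    using assms by (simp add: of_nat_nat)
  then show ?thesis using assms by linarith
qed

lemma bounded_palindromics_coeff_bound:
  assumes p: "p \<in> bounded_palindromics n R" and R: "1 \<le> R" and i: "i \<le> n"
  shows "\<bar>of_int (coeff p i)\<bar> \<le> 4 ^ n * R ^ i"
proof -
  have "\<bar>of_int (coeff p i)\<bar> \<le> 2 ^ degree p * R ^ (degree p - (degree p - i))"
  proof (cases "i \<le> degree p")
    case True
    then have "coeff p i = coeff p (degree p - i)"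
      using p unfolding bounded_palindromics_def palindromic_def by blast
    then show ?thesis
      using coeff_bound_if_roots_bounded[OF _ R, of p "degree p - i"] p
      unfolding bounded_palindromics_def by simp
  qed (use R in \<open>simp add: coeff_eq_0\<close>)
  also have "\<dots> \<le> 2 ^ (2 * n) * R ^ i"
    using p R i unfolding bounded_palindromics_def
    by (intro mult_mono power_increasing) auto
  finally show ?thesis
    by (simp add: power_mult)
qed

lemma inj_on_degree_low_coeffs:
  "inj_on (\<lambda>p. (degree p, restrict (coeff p) {0..n})) (bounded_palindromics n R)"
proof (rule inj_onI)
  fix p q
  assume pq: "p \<in> bounded_palindromics n R" "q \<in> bounded_palindromics n R"
    and "(degree p, restrict (coeff p) {0..n}) = (degree q, restrict (coeff q) {0..n})"
  then have "degree p = degree q" and low: "restrict (coeff p) {0..n} = restrict (coeff q) {0..n}"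
    by auto
  moreover have "coeff p i = coeff q i" if "i \<le> n" for i
    using fun_cong[OF low, of i] that by simp
  ultimately show "p = q"
    using pq unfolding bounded_palindromics_def
    by (intro palindromic_eq_if_low_coeffs_eq[of p q n]) auto
qed

lemma card_bounded_palindromics_le:
  assumes R: "1 \<le> R"
  shows "finite (bounded_palindromics n R)"
    and "real (card (bounded_palindromics n R)) \<le>
           (2 * real n + 1) * (3 * 4 ^ n) ^ (n + 1) * R ^ (n * (n + 1) div 2)"
proof -
  define K :: "nat \<Rightarrow> real" where "K i = 4 ^ n * R ^ i" for i
  define T where "T = {0..2 * n} \<times> (\<Pi>\<^sub>E i\<in>{0..n}. {-\<lfloor>K i\<rfloor>..\<lfloor>K i\<rfloor>})"
  let ?g = "\<lambda>p. (degree p, restrict (coeff p) {0..n})"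
  have "?g ` bounded_palindromics n R \<subseteq> T"
  proof (rule image_subsetI)
    fix p assume p: "p \<in> bounded_palindromics n R"
    have "coeff p i \<in> {-\<lfloor>K i\<rfloor>..\<lfloor>K i\<rfloor>}" if "i \<le> n" for i
    proof -
      have "coeff p i \<le> \<lfloor>K i\<rfloor>" "- coeff p i \<le> \<lfloor>K i\<rfloor>"
        using bounded_palindromics_coeff_bound[OF p R that]
        unfolding K_def by (auto simp: abs_le_iff le_floor_iff)
      then show ?thesis by simp
    qed
    then show "?g p \<in> T"
      using p unfolding T_def bounded_palindromics_def by auto
  qed
  moreover have "finite T"
    unfolding T_def by (intro finite_cartesian_product finite_PiE) auto
  ultimately have fin: "finite (bounded_palindromics n R)"
    and le: "card (bounded_palindromics n R) \<le> card T"
    using inj_on_degree_low_coeffs[of n R]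
    by (metis finite_imageD finite_subset, intro card_inj_on_le)
  show "finite (bounded_palindromics n R)" by (rule fin)
  have "real (card (bounded_palindromics n R)) \<le> real (card T)"
    using le by simp
  also have "real (card T) = (2 * real n + 1) * (\<Prod>i\<in>{0..n}. real (card {-\<lfloor>K i\<rfloor>..\<lfloor>K i\<rfloor>}))"
    unfolding T_def
    by (simp add: card_cartesian_product card_PiE algebra_simps del: card_atLeastAtMost_int)
  also have "\<dots> \<le> (2 * real n + 1) * (\<Prod>i\<in>{0..n}. 3 * K i)"
    using R unfolding K_def
    by (intro mult_left_mono prod_mono card_symmetric_int_interval_le conjI)
       (auto intro!: mult_ge1_I simp: one_le_power)
  also have "(\<Prod>i\<in>{0..n}. 3 * K i) = (3 * 4 ^ n) ^ (n + 1) * R ^ (n * (n + 1) div 2)"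
    unfolding K_def by (simp add: prod.distrib power_sum[symmetric] gauss_sum_nat mult.assoc)
  finally show "real (card (bounded_palindromics n R)) \<le>
                  (2 * real n + 1) * (3 * 4 ^ n) ^ (n + 1) * R ^ (n * (n + 1) div 2)"
    by (simp only: mult.assoc)
qed

text \<open>Each element of \<open>B n R\<close> is the leading root of its characteristic polynomial, which
  therefore determines it.\<close>
lemma card_B_le_card_bounded_palindromics:
  assumes "1 \<le> R"
  shows "finite (B n R)" and "card (B n R) \<le> card (bounded_palindromics n R)"
proof -
  define f where "f x = (SOME p. char_poly x p \<and> degree p \<le> 2 * n)" for x
  have f: "monic_palindromic_leading x (f x) \<and> degree (f x) \<le> 2 * n" if "x \<in> B n R" for x
    using someI_ex[of "\<lambda>p. char_poly x p \<and> degree p \<le> 2 * n"] that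
    unfolding B_def f_def char_poly_def by blast
  have "f ` B n R \<subseteq> bounded_palindromics n R"
  proof (rule image_subsetI)
    fix x assume x: "x \<in> B n R"
    then have "x \<le> R" unfolding B_def by simp
    with f[OF x] show "f x \<in> bounded_palindromics n R"
      unfolding bounded_palindromics_def monic_palindromic_leading_def by force
  qed
  moreover have "inj_on f (B n R)"
    using f leading_root_unique by (metis inj_onI)
  moreover note card_bounded_palindromics_le[OF assms]
  ultimately show "finite (B n R)" "card (B n R) \<le> card (bounded_palindromics n R)"
    by (metis finite_imageD finite_subset, intro card_inj_on_le)
qed


subsection \<open>Irreducibility\<close>

lemma eisenstein_coeff_not_dvd:
  fixes g h :: "int poly"
  assumes "prime p" "lead_coeff (g * h) = 1" "p dvd coeff g 0" "\<not> p dvd coeff h 0"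
  obtains i where "i \<le> degree g" "\<not> p dvd coeff (g * h) i"
proof -
  have "lead_coeff g * lead_coeff h = 1"
    using assms(2) by (simp add: lead_coeff_mult)
  then have "\<not> p dvd lead_coeff g"
    using assms(1) by (metis dvd_mult2 not_prime_unit)
  then obtain i where i: "\<not> p dvd coeff g i" "i \<le> degree g"
    and below: "\<And>k. k < i \<Longrightarrow> p dvd coeff g k"
    using ex_least_nat_le[of "\<lambda>i. \<not> p dvd coeff g i" "degree g"] assms(3) by auto
  have "coeff (g * h) i = (\<Sum>k<i. coeff g k * coeff h (i - k)) + coeff g i * coeff h 0"
    by (simp add: coeff_mult lessThan_Suc_atMost[symmetric])
  moreover have "p dvd (\<Sum>k<i. coeff g k * coeff h (i - k))"
    using below by (auto intro: dvd_sum)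
  moreover have "\<not> p dvd coeff g i * coeff h 0"
    using assms(1,4) i(1) by (simp add: prime_dvd_mult_iff)
  ultimately have "\<not> p dvd coeff (g * h) i"
    by (simp add: dvd_add_right_iff)
  with i(2) show thesis by (rule that)
qed

lemma eisenstein_irreducible\<^sub>d:
  fixes q :: "int poly"
  assumes p: "prime p" and q: "lead_coeff q = 1" "degree q > 0"
    and dvd: "\<And>j. j < degree q \<Longrightarrow> p dvd coeff q j" and not_dvd: "\<not> p\<^sup>2 dvd coeff q 0"
  shows "irreducible\<^sub>d q"
proof (rule irreducible\<^sub>dI)
  fix g h assume deg: "degree g > 0" "degree g < degree q" "degree h > 0" "degree h < degree q"
    and gh: "q = g * h"
  have "p dvd coeff g 0 * coeff h 0"
    using dvd[of 0] q(2) gh by (simp add: coeff_mult)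
  moreover have "\<not> (p dvd coeff g 0 \<and> p dvd coeff h 0)"
    using not_dvd gh by (auto simp: coeff_mult power2_eq_square mult_dvd_mono)
  ultimately consider "p dvd coeff g 0" "\<not> p dvd coeff h 0" | "p dvd coeff h 0" "\<not> p dvd coeff g 0"
    using p prime_dvd_mult_iff by blast
  then show False
  proof cases
    case 1
    then show False
      using eisenstein_coeff_not_dvd[OF p, of g h] q(1) gh deg dvd by fastforce
  next
    case 2
    then show False
      using eisenstein_coeff_not_dvd[OF p, of h g] q(1) gh deg dvd by (fastforce simp: mult.commute)
  qed
qed (fact q(2))

text \<open>Over \<open>\<rat>\<close> the gcd of the two polynomials is a nonconstant common factor, because the
  Bezout identity makes it vanish at the common root.\<close>
lemma monic_irreducible\<^sub>d_common_root_eq: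
  fixes q1 q2 :: "int poly" and y :: "'a::field_char_0"
  assumes irr: "irreducible\<^sub>d q1" "irreducible\<^sub>d q2" and monic: "lead_coeff q1 = 1" "lead_coeff q2 = 1"
    and root: "ipoly q1 y = 0" "ipoly q2 y = 0"
  shows "q1 = q2"
proof -
  let ?r = "map_poly rat_of_int" and ?a = "map_poly (of_rat :: rat \<Rightarrow> 'a)"
  interpret of_rat_poly: map_poly_comm_ring_hom "of_rat :: rat \<Rightarrow> 'a"
    by unfold_locales
  define G where "G = gcd (?r q1) (?r q2)"
  have ipoly_rat: "ipoly q y = poly (?a (?r q)) y" for q
    unfolding ipoly_def by (simp add: map_poly_map_poly o_def)
  have "G = fst (bezout_coefficients (?r q1) (?r q2)) * ?r q1 +
            snd (bezout_coefficients (?r q1) (?r q2)) * ?r q2"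
    unfolding G_def by (simp add: bezout_coefficients_fst_snd)
  then have G_root: "poly (?a G) y = 0"
    using root by (simp add: ipoly_rat of_rat_poly.hom_add of_rat_poly.hom_mult)
  have "degree G > 0"
  proof (rule ccontr)
    assume "\<not> degree G > 0"
    then obtain c where "G = [:c:]"
      by (metis degree_eq_zeroE gr0I)
    moreover have "G \<noteq> 0"
      using monic unfolding G_def by auto
    ultimately show False
      using G_root by simp
  qed
  moreover have irr_rat: "irreducible\<^sub>d (?r q1)" "irreducible\<^sub>d (?r q2)"
    using irr by (blast intro: irreducible\<^sub>d_int_rat)+
  moreover have "G dvd ?r q1" "G dvd ?r q2"
    unfolding G_def by simp_all
  ultimately obtain c where "c \<noteq> 0" "?r q1 = smult c G"
    using irreducible\<^sub>d_dvd_smult by blast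
  with \<open>G dvd ?r q2\<close> have "?r q1 dvd ?r q2"
    by (metis dvd_trans dvd_smult_cancel dvd_refl)
  then have "?r q1 = ?r q2"
    using irr_rat monic by (intro irreducible\<^sub>d_dvd_eq) simp_all
  then show ?thesis
    by (rule of_int_poly_hom.injectivity)
qed


text \<open>The polynomial \<open>y\<^sup>n + a\<^sub>1 y\<^bsup>n-1\<^esup> + \<dots> + a\<^sub>n\<close>.\<close>
definition monic_poly :: "nat \<Rightarrow> (nat \<Rightarrow> int) \<Rightarrow> int poly" where
  "monic_poly n a = Poly (map (\<lambda>j. a (n - j)) [0..<n] @ [1])"

lemma coeff_monic_poly:
  "coeff (monic_poly n a) j = (if j < n then a (n - j) else if j = n then 1 else 0)"
  unfolding monic_poly_def coeff_Poly nth_default_def by (auto simp: nth_append)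

lemma degree_monic_poly [simp]: "degree (monic_poly n a) = n"
  by (rule antisym; (rule degree_le le_degree)) (simp_all add: coeff_monic_poly)

lemma lead_coeff_monic_poly: "lead_coeff (monic_poly n a) = 1"
  by (simp add: coeff_monic_poly)

lemma coeff_monic_poly_degree [simp]: "coeff (monic_poly n a) n = 1"
  by (simp add: coeff_monic_poly)

lemma ipoly_monic_poly:
  fixes y :: "'a::{comm_ring_1,ring_char_0}"
  shows "ipoly (monic_poly n a) y = y ^ n + (\<Sum>k=1..n. of_int (a k) * y ^ (n - k))"
proof -
  have "(\<Sum>j<n. of_int (a (n - j)) * y ^ j) = (\<Sum>k=1..n. of_int (a k) * y ^ (n - k))"
    by (rule sum.reindex_bij_witness[where i = "\<lambda>k. n - k" and j = "\<lambda>j. n - j"]) auto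
  then show ?thesis
    by (simp add: ipoly_altdef coeff_monic_poly lessThan_Suc_atMost[symmetric])
qed

text \<open>The polynomial \<open>t\<^sup>n q(t + 1/t)\<close> of degree \<open>2n\<close>, for \<open>q\<close> of degree \<open>n\<close>.\<close>
definition palindromize :: "nat \<Rightarrow> int poly \<Rightarrow> int poly" where
  "palindromize n q = (\<Sum>j\<le>n. smult (coeff q j) (monom 1 (n - j) * [:1, 0, 1:] ^ j))"

lemma coeff_palindromize_ge:
  assumes "degree q = n" "lead_coeff q = 1" "2 * n \<le> m"
  shows "coeff (palindromize n q) m = (if m = 2 * n then 1 else 0)"
proof -
  have deg_pow: "degree ([:1, 0, 1:] ^ j :: int poly) = 2 * j" for j
    by (simp add: degree_power_eq)
  have lead_pow: "coeff ([:1, 0, 1:] ^ j :: int poly) (2 * j) = 1" for j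
    using lead_coeff_power[of "[:1, 0, 1:] :: int poly" j] deg_pow[of j] by simp
  have summand: "coeff (monom 1 (n - j) * [:1, 0, 1:] ^ j :: int poly) m =
                  (if j = n \<and> m = 2 * n then 1 else 0)"
    if "j \<le> n" for j
  proof -
    have "coeff (monom 1 (n - j) * [:1, 0, 1:] ^ j :: int poly) m =
          coeff ([:1, 0, 1:] ^ j) (m - (n - j))"
      using that assms(3) by (simp add: coeff_monom_mult)
    moreover have "j = n \<and> m = 2 * n \<or> degree ([:1, 0, 1:] ^ j :: int poly) < m - (n - j)"
      using that assms(3) deg_pow by auto
    ultimately show ?thesis
      using lead_pow[of n] by (auto simp: coeff_eq_0)
  qed
  have "coeff (palindromize n q) m =
          (\<Sum>j\<le>n. coeff q j * coeff (monom 1 (n - j) * [:1, 0, 1:] ^ j :: int poly) m)"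
    by (simp add: palindromize_def coeff_sum)
  also have "\<dots> = (\<Sum>j\<le>n. coeff q j * (if j = n \<and> m = 2 * n then 1 else 0))"
    by (intro sum.cong refl) (simp only: atMost_iff summand)
  also have "\<dots> = (if m = 2 * n then 1 else 0)"
    using assms(1,2) by (simp add: lessThan_Suc_atMost[symmetric])
  finally show ?thesis .
qed

lemma degree_palindromize:
  assumes "degree q = n" "lead_coeff q = 1"
  shows "degree (palindromize n q) = 2 * n" and "lead_coeff (palindromize n q) = 1"
proof -
  show deg: "degree (palindromize n q) = 2 * n"
    using coeff_palindromize_ge[OF assms]
    by (intro antisym degree_le le_degree) auto
  show "lead_coeff (palindromize n q) = 1"
    unfolding deg using coeff_palindromize_ge[OF assms] by simp
qed

lemma ipoly_palindromize:
  fixes t :: "'a::field_char_0"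
  assumes "degree q = n" "t \<noteq> 0"
  shows "ipoly (palindromize n q) t = t ^ n * ipoly q (t + 1 / t)"
proof -
  have "t ^ (n - j) * (t\<^sup>2 + 1) ^ j = t ^ n * (t + 1 / t) ^ j" if "j \<le> n" for j
  proof -
    have "t ^ j * (t + 1 / t) ^ j = (t\<^sup>2 + 1) ^ j"
      using assms(2) by (simp add: power_mult_distrib[symmetric] field_simps power2_eq_square)
    moreover have "t ^ n = t ^ (n - j) * t ^ j"
      using that by (simp flip: power_add)
    ultimately show ?thesis by (simp add: mult.assoc)
  qed
  then have "ipoly (palindromize n q) t = (\<Sum>j\<le>n. t ^ n * (of_int (coeff q j) * (t + 1 / t) ^ j))"
    unfolding ipoly_def palindromize_def
    by (simp add: of_int_poly_hom.hom_sum poly_sum poly_monom poly_power power2_eq_square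
        hom_distribs algebra_simps)
  also have "\<dots> = t ^ n * ipoly q (t + 1 / t)"
    by (simp add: ipoly_altdef assms(1) sum_distrib_left)
  finally show ?thesis .
qed

lemma palindromic_palindromize:
  assumes "degree q = n" "lead_coeff q = 1"
  shows "palindromic (palindromize n q)"
proof (rule palindromic_if_ipoly_inverse)
  fix t :: complex assume t: "t \<noteq> 0"
  have "t ^ (2 * n) * (inverse t) ^ n = t ^ n"
    using t by (simp add: mult_2 power_add power_inverse)
  then show "ipoly (palindromize n q) t =
               t ^ degree (palindromize n q) * ipoly (palindromize n q) (inverse t)"
    using t by (simp add: degree_palindromize[OF assms] ipoly_palindromize[OF assms(1)]
        inverse_eq_divide add.commute mult.assoc[symmetric])
qed


subsection \<open>Roots of a polynomial with one dominant coefficient\<close>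

lemma coeff_prod_linear_factors_sum_list:
  fixes bs :: "'a::idom list"
  assumes "bs \<noteq> []"
  shows "coeff (\<Prod>b\<leftarrow>bs. [:-b, 1:]) (length bs - 1) = - sum_list bs"
  using assms
proof (induction bs)
  case (Cons b bs)
  show ?case
  proof (cases "bs = []")
    case False
    define r where "r = (\<Prod>b\<leftarrow>bs. [:-b, 1:])"
    have "degree r = length bs"
      unfolding r_def using degree_linear_factors[of uminus bs] by simp
    moreover have "lead_coeff r = 1"
      unfolding r_def by (rule monic_prod_list) auto
    ultimately have "coeff r (length bs) = 1" by simp
    obtain l where l: "length bs = Suc l"
      using False by (cases bs) auto
    have "(\<Prod>x\<leftarrow>b # bs. [:-x, 1:]) = pCons 0 r - smult b r"
      unfolding r_def by simp
    then have "coeff (\<Prod>x\<leftarrow>b # bs. [:-x, 1:]) (length (b # bs) - 1) =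
               coeff r l - b * coeff r (Suc l)"
      by (simp add: l)
    also have "\<dots> = - sum_list bs - b"
      using Cons.IH False \<open>coeff r (length bs) = 1\<close> unfolding r_def l by simp
    finally show ?thesis by simp
  qed simp
qed simp

lemma norm_sum_list_clustered_le:
  fixes bs :: "'a::real_normed_algebra_1 list"
  assumes "\<forall>b\<in>set bs. (P b \<and> norm (b - c) \<le> e) \<or> (\<not> P b \<and> norm b \<le> e)"
  shows "norm (sum_list bs - of_nat (length (filter P bs)) * c) \<le> of_nat (length bs) * e"
  using assms
proof (induction bs)
  case (Cons b bs)
  let ?d = "sum_list bs - of_nat (length (filter P bs)) * c"
  have "norm (sum_list (b # bs) - of_nat (length (filter P (b # bs))) * c) =
          norm ((if P b then b - c else b) + ?d)"
    by (simp add: algebra_simps)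
  also have "\<dots> \<le> norm (if P b then b - c else b) + norm ?d"
    by (rule norm_triangle_ineq)
  also have "\<dots> \<le> e + of_nat (length bs) * e"
    using Cons by (intro add_mono) auto
  finally show ?case by (simp add: algebra_simps)
qed simp

lemma length_filter_eq_1_if_clustered:
  fixes bs :: "'a::real_normed_algebra_1 list"
  assumes A: "0 < A" and sum: "sum_list bs = of_real A"
    and clustered: "\<forall>b\<in>set bs. (P b \<and> norm (b - of_real A) \<le> e) \<or> (\<not> P b \<and> norm b \<le> e)"
    and e: "of_nat (length bs) * e \<le> A / 4"
  shows "length (filter P bs) = 1"
proof -
  define k where "k = length (filter P bs)"
  have "of_real ((1 - real k) * A) = sum_list bs - of_nat k * (of_real A :: 'a)"
    using sum by (simp add: algebra_simps mult_of_nat_commute)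
  then have "\<bar>(1 - real k) * A\<bar> \<le> of_nat (length bs) * e"
    using norm_sum_list_clustered_le[OF clustered] unfolding k_def by (metis norm_of_real)
  then have "\<bar>1 - real k\<bar> * A \<le> 1 / 4 * A"
    using A e by (simp only: abs_mult abs_of_pos)
  then have "\<bar>1 - real k\<bar> \<le> 1 / 4"
    by (rule mult_right_le_imp_le) (use A in linarith)
  then show ?thesis
    unfolding k_def by linarith
qed

text \<open>The roots of \<open>y\<^sup>n + a\<^sub>1 y\<^bsup>n-1\<^esup> + \<dots> + a\<^sub>n\<close> with \<open>\<bar>a\<^sub>k\<bar> \<le> eps n R\<^sup>k\<close> for \<open>k \<ge> 2\<close> are either smaller
  than \<open>rho n R\<close> or close to \<open>-a\<^sub>1\<close>; \<open>eps n\<close> is chosen to make \<open>n eps n / rho n\<^sup>n = 1 / (8n)\<close>.\<close>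
definition rho :: "nat \<Rightarrow> real" where
  "rho n = 1 / (8 * real n)"

definition eps :: "nat \<Rightarrow> real" where
  "eps n = rho n ^ n / (8 * real n ^ 2)"

lemma rho_pos: "1 \<le> n \<Longrightarrow> 0 < rho n"
  unfolding rho_def by simp

lemma rho_le: "1 \<le> n \<Longrightarrow> rho n \<le> 1 / 8"
  unfolding rho_def by (simp add: field_simps)

lemma eps_pos: "1 \<le> n \<Longrightarrow> 0 < eps n"
  unfolding eps_def using rho_pos by simp

lemma eps_le:
  assumes "2 \<le> n"
  shows "eps n \<le> 1 / 256"
proof -
  have "rho n ^ n \<le> rho n ^ 1"
    using assms rho_pos[of n] rho_le[of n] by (intro power_decreasing) auto
  then have "rho n ^ n \<le> 1 / 8"
    using rho_le[of n] assms by simp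
  moreover have "32 \<le> 8 * real n ^ 2"
    using power_mono[of 2 "real n" 2] assms by simp
  ultimately have "eps n \<le> (1 / 8) / 32"
    unfolding eps_def using rho_pos[of n] assms by (intro frac_le) auto
  then show ?thesis by simp
qed

lemma large_root_near_minus_a1:
  fixes a :: "nat \<Rightarrow> int" and y :: complex
  assumes n: "1 \<le> n" and R: "0 < R"
    and a: "\<And>k. k \<in> {2..n} \<Longrightarrow> \<bar>of_int (a k)\<bar> \<le> eps n * R ^ k"
    and root: "ipoly (monic_poly n a) y = 0" and large: "rho n * R \<le> cmod y"
  shows "cmod (y + of_int (a 1)) \<le> cmod y / (8 * real n)"
proof -
  define r where "r = rho n"
  have r: "0 < r" "r \<le> 1"
    unfolding r_def using rho_pos[OF n] rho_le[OF n] by auto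
  have y: "0 < cmod y"
    using mult_pos_pos[OF r(1) R] large unfolding r_def by linarith
  have R_le: "R \<le> cmod y / r"
    using large r unfolding r_def by (simp add: field_simps)
  have summand: "cmod (of_int (a k) * y ^ (n - k)) \<le> eps n * cmod y ^ n / r ^ n"
    if k: "k \<in> {2..n}" for k
  proof -
    have "cmod (of_int (a k) * y ^ (n - k)) \<le> eps n * R ^ k * cmod y ^ (n - k)"
      using a[OF k] by (simp add: norm_mult norm_power mult_right_mono)
    also have "\<dots> \<le> eps n * (cmod y / r) ^ k * cmod y ^ (n - k)"
      using eps_pos[OF n] R R_le by (intro mult_right_mono mult_left_mono power_mono) auto
    also have "\<dots> = eps n * cmod y ^ n / r ^ k"
      using k by (simp add: power_divide power_add[symmetric])
    also have "\<dots> \<le> eps n * cmod y ^ n / r ^ n"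
      using eps_pos[OF n] r k y by (intro divide_left_mono power_decreasing) auto
    finally show ?thesis .
  qed
  have "y ^ (n - 1) * (y + of_int (a 1)) = - (\<Sum>k=2..n. of_int (a k) * y ^ (n - k))"
  proof -
    have "y ^ n + (\<Sum>k=1..n. of_int (a k) * y ^ (n - k)) = 0"
      using root by (simp add: ipoly_monic_poly)
    moreover have "{1..n} = insert 1 {2..n}" "y ^ n = y ^ (n - 1) * y"
      using n by (auto simp flip: power_Suc2)
    ultimately show ?thesis
      by (simp add: algebra_simps eq_neg_iff_add_eq_0)
  qed
  then have "cmod y ^ (n - 1) * cmod (y + of_int (a 1)) =
               cmod (\<Sum>k=2..n. of_int (a k) * y ^ (n - k))"
    by (metis norm_minus_cancel norm_mult norm_power)
  also have "\<dots> \<le> (\<Sum>k=2..n. cmod (of_int (a k) * y ^ (n - k)))"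
    by (rule norm_sum)
  also have "\<dots> \<le> (\<Sum>k=2..n. eps n * cmod y ^ n / r ^ n)"
    by (rule sum_mono) (rule summand)
  also have "\<dots> \<le> real n * (eps n * cmod y ^ n / r ^ n)"
    using eps_pos[OF n] r by (simp add: divide_right_mono mult_right_mono)
  also have "\<dots> = cmod y ^ (n - 1) * (cmod y / (8 * real n))"
    using n r power_Suc[of "cmod y" "n - 1"] unfolding eps_def r_def
    by (simp add: field_simps power2_eq_square)
  finally show ?thesis
    by (rule mult_left_le_imp_le) (use y in simp)
qed

lemma large_root_cluster:
  fixes a :: "nat \<Rightarrow> int" and y :: complex
  assumes n: "1 \<le> n" and R: "0 < R" and a1: "of_int (a 1) \<le> (0::real)"
    and a: "\<And>k. k \<in> {2..n} \<Longrightarrow> \<bar>of_int (a k)\<bar> \<le> eps n * R ^ k"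
    and root: "ipoly (monic_poly n a) y = 0" and large: "rho n * R \<le> cmod y"
  shows "cmod (y + of_int (a 1)) \<le> - of_int (a 1) / (4 * real n)"
proof -
  define w where "w = cmod (y + of_int (a 1))"
  have "8 * real n * w \<le> cmod y"
    using large_root_near_minus_a1[OF n R a root large] n unfolding w_def by (simp add: field_simps)
  also have "cmod y \<le> w + - of_int (a 1)"
    using norm_triangle_ineq4[of "y + of_int (a 1)" "of_int (a 1)"] a1 unfolding w_def
    by (simp add: abs_of_nonpos)
  finally have "8 * (real n * w) \<le> w + - of_int (a 1)" by simp
  moreover have "w \<le> real n * w" "0 \<le> w"
    using n unfolding w_def by (simp_all add: mult_le_cancel_right1)
  ultimately have "4 * real n * w \<le> - of_int (a 1)"
    by linarith
  then show ?thesis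
    unfolding w_def using n by (simp add: field_simps)
qed

text \<open>The large roots lie near \<open>-a\<^sub>1\<close> and the others near \<open>0\<close>, while all roots together
  sum to \<open>-a\<^sub>1\<close>; hence exactly one root is large.\<close>
lemma monic_poly_unique_large_root:
  fixes a :: "nat \<Rightarrow> int" and R :: real
  assumes n: "2 \<le> n" and R: "0 < R" and a1: "of_int (a 1) \<le> - R / 2"
    and a: "\<And>k. k \<in> {2..n} \<Longrightarrow> \<bar>of_int (a k)\<bar> \<le> eps n * R ^ k"
  obtains b where "ipoly (monic_poly n a) b = 0" "rho n * R \<le> cmod b"
    "\<And>z. ipoly (monic_poly n a) z = 0 \<Longrightarrow> rho n * R \<le> cmod z \<Longrightarrow> z = b"
proof -
  obtain bs :: "complex list" where prod: "map_poly of_int (monic_poly n a) = (\<Prod>b\<leftarrow>bs. [:-b, 1:])"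
    and "length bs = degree (monic_poly n a)"
    and "set bs = {z. ipoly (monic_poly n a) z = 0}"
    by (rule monic_ipoly_factorization[OF lead_coeff_monic_poly[of n a]])
  then have len: "length bs = n" and roots: "\<And>z. z \<in> set bs \<longleftrightarrow> ipoly (monic_poly n a) z = 0"
    by auto
  define A where "A = - real_of_int (a 1)"
  define P where "P b \<longleftrightarrow> rho n * R \<le> cmod b" for b :: complex
  have A: "R / 2 \<le> A"
    using a1 unfolding A_def by linarith
  have "rho n * R = (R / 2) / (4 * real n)"
    unfolding rho_def by simp
  also have "\<dots> \<le> A / (4 * real n)"
    using A by (intro divide_right_mono) auto
  finally have small: "rho n * R \<le> A / (4 * real n)" .
  have clustered: "\<forall>b\<in>set bs. (P b \<and> cmod (b - of_real A) \<le> A / (4 * real n)) \<or>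
                              (\<not> P b \<and> cmod b \<le> A / (4 * real n))"
  proof (intro ballI)
    fix b assume "b \<in> set bs"
    then have "P b \<Longrightarrow> cmod (b + of_int (a 1)) \<le> A / (4 * real n)"
      using large_root_cluster[OF _ R _ a, of b] roots n A R unfolding P_def A_def by simp
    then have "P b \<Longrightarrow> cmod (b - of_real A) \<le> A / (4 * real n)"
      unfolding A_def by simp
    then show "(P b \<and> cmod (b - of_real A) \<le> A / (4 * real n)) \<or>
               (\<not> P b \<and> cmod b \<le> A / (4 * real n))"
      using small unfolding P_def by auto
  qed
  have "bs \<noteq> []"
    using len n by auto
  then have "sum_list bs = of_real A"
    using coeff_prod_linear_factors_sum_list[of bs] n len
    unfolding prod[symmetric] A_def by (simp add: coeff_monic_poly)
  then have "length (filter P bs) = 1"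
    using A R n len by (intro length_filter_eq_1_if_clustered[OF _ _ clustered]) auto
  then obtain b where "filter P bs = [b]"
    by (auto simp: length_Suc_conv)
  then have "{z \<in> set bs. P z} = {b}"
    by (metis set_filter list.set(1) list.simps(15))
  then show thesis
    using that roots unfolding P_def by blast
qed

text \<open>The large root is real, since its complex conjugate is a large root as well.\<close>
lemma monic_poly_dominant_root:
  fixes a :: "nat \<Rightarrow> int" and R :: real
  assumes n: "2 \<le> n" and R: "0 < R"
    and a1: "- (1 / 2 + eps n) * R \<le> of_int (a 1)" "of_int (a 1) \<le> - R / 2"
    and a: "\<And>k. k \<in> {2..n} \<Longrightarrow> \<bar>of_int (a k)\<bar> \<le> eps n * R ^ k"
  obtains y1 :: real where "ipoly (monic_poly n a) y1 = 0" "8 * R / 17 \<le> y1" "y1 \<le> R"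
    "\<And>y::complex. ipoly (monic_poly n a) y = 0 \<Longrightarrow> y = of_real y1 \<or> cmod y < rho n * R"
proof -
  obtain b where b: "ipoly (monic_poly n a) b = 0" "rho n * R \<le> cmod b"
    and unique: "\<And>z. ipoly (monic_poly n a) z = 0 \<Longrightarrow> rho n * R \<le> cmod z \<Longrightarrow> z = b"
    using monic_poly_unique_large_root[OF n R a1(2) a] by blast
  have "cnj b = b"
    using b by (intro unique) (simp_all add: ipoly_cnj)
  then obtain y1 where y1: "b = of_real y1"
    by (metis Reals_cnj_iff Reals_cases)
  have root: "ipoly (monic_poly n a) y1 = 0"
    using b(1) unfolding y1 ipoly_of_real by simp
  define A where "A = - real_of_int (a 1)"
  have A: "R / 2 \<le> A" "A \<le> (1 / 2 + eps n) * R"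
    using a1 unfolding A_def by linarith+
  have "cmod (b + of_int (a 1)) \<le> cmod b / (8 * real n)"
    using large_root_near_minus_a1[OF _ R a b] n by simp
  moreover have "b + of_int (a 1) = of_real (y1 - A)"
    unfolding y1 A_def by simp
  ultimately have "\<bar>y1 - A\<bar> \<le> \<bar>y1\<bar> / (8 * real n)"
    unfolding y1 by (simp only: norm_of_real)
  also have "\<dots> \<le> \<bar>y1\<bar> / 16"
    using n by (intro divide_left_mono) auto
  finally have close: "\<bar>y1 - A\<bar> \<le> \<bar>y1\<bar> / 16" .
  have "0 < y1"
  proof (rule ccontr)
    assume "\<not> 0 < y1"
    then have "\<bar>y1 - A\<bar> = \<bar>y1\<bar> + A" "0 < A"
      using A(1) R by auto
    then show False
      using close by linarith
  qed
  with close have "y1 - A \<le> y1 / 16" "A - y1 \<le> y1 / 16"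
    by linarith+
  moreover have "(1 / 2 + eps n) * R \<le> (1 / 2 + 1 / 256) * R"
    using eps_le[OF n] R by (intro mult_right_mono) auto
  then have "A \<le> 129 / 256 * R"
    using A(2) by simp
  ultimately have "8 * R / 17 \<le> y1" "y1 \<le> R"
    using A R by linarith+
  moreover have "y = of_real y1 \<or> cmod y < rho n * R" if "ipoly (monic_poly n a) y = 0" for y
    using unique[OF that] y1 by force
  ultimately show thesis
    using root that by blast
qed


subsection \<open>Lower bound\<close>

text \<open>The larger solution \<open>x\<close> of \<open>x + 1/x = y\<close>.\<close>
definition trace_root :: "real \<Rightarrow> real" where
  "trace_root y = (y + sqrt (y\<^sup>2 - 4)) / 2"

lemma trace_root:
  assumes "2 < y"
  shows "1 < trace_root y" "trace_root y + 1 / trace_root y = y" "y - 1 \<le> trace_root y"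
proof -
  define s where "s = sqrt (y\<^sup>2 - 4)"
  have "2\<^sup>2 < y\<^sup>2"
    using assms by (intro power_strict_mono) auto
  then have s: "0 \<le> s" "s\<^sup>2 = y\<^sup>2 - 4"
    unfolding s_def by simp_all
  have x: "trace_root y = (y + s) / 2"
    unfolding trace_root_def s_def ..
  show x1: "1 < trace_root y"
    unfolding x using s assms by simp
  have "trace_root y * (y - trace_root y) = (y\<^sup>2 - s\<^sup>2) / 4"
    unfolding x by (simp add: field_simps power2_eq_square)
  then have "trace_root y * (y - trace_root y) = 1"
    using s(2) by simp
  then have "1 / trace_root y = y - trace_root y"
    using x1 by (simp add: divide_eq_eq mult.commute)
  then show "trace_root y + 1 / trace_root y = y"
    by simp
  moreover have "1 / trace_root y \<le> 1"
    using x1 by simp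
  ultimately show "y - 1 \<le> trace_root y"
    by linarith
qed

lemma norm_le_norm_add_inverse:
  fixes t :: "'a::real_normed_field"
  shows "norm t \<le> norm (t + 1 / t) + 1"
proof (cases "norm t \<le> 1")
  case False
  then have "norm (1 / t) \<le> 1"
    by (simp add: norm_divide divide_le_eq_1)
  then show ?thesis
    using norm_triangle_ineq4[of "t + 1 / t" "1 / t"] by simp
qed (use norm_ge_zero[of "t + 1 / t"] in linarith)

lemma add_inverse_eq_trace_root:
  fixes t :: complex
  assumes y: "2 < y" and t: "t \<noteq> 0" "t + 1 / t = of_real y"
  shows "t = of_real (trace_root y) \<or> t = of_real (1 / trace_root y)"
proof -
  define x where "x = trace_root y"
  have "t * t - of_real y * t + 1 = t * (t + 1 / t - of_real y)"
    using t(1) by (simp add: algebra_simps)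
  then have "t * t - of_real y * t + 1 = 0"
    using t(2) by simp
  moreover have "(t - u) * (t - v) = t * t - (u + v) * t + u * v" for u v :: complex
    by (simp add: algebra_simps)
  moreover have "of_real x + of_real (1 / x) = (of_real y :: complex)"
    using arg_cong[OF trace_root(2)[OF y], of "of_real :: real \<Rightarrow> complex"] unfolding x_def by simp
  moreover have "of_real x * of_real (1 / x) = (1 :: complex)"
    using trace_root(1)[OF y] unfolding x_def by simp
  ultimately have "(t - of_real x) * (t - of_real (1 / x)) = 0"
    by simp
  then show ?thesis
    unfolding x_def by simp
qed

text \<open>The roots \<open>t\<close> of the palindromization are those with \<open>t + 1/t\<close> a root of \<open>q\<close>: for the root
  \<open>y\<close> these are \<open>trace_root y\<close> and its inverse, and the others are small.\<close>
lemma leading_root_palindromize: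
  assumes q: "degree q = n" "lead_coeff q = 1" and y: "2 < y" "ipoly q y = 0"
    and small: "\<And>z::complex. ipoly q z = 0 \<Longrightarrow> z = of_real y \<or> cmod z + 1 \<le> trace_root y"
  shows "monic_palindromic_leading (trace_root y) (palindromize n q)"
proof -
  define x where "x = trace_root y"
  have x: "1 < x" "x + 1 / x = y"
    unfolding x_def using trace_root[OF y(1)] by auto
  have pal: "palindromic (palindromize n q)" and lc: "lead_coeff (palindromize n q) = 1"
    using palindromic_palindromize[OF q] degree_palindromize[OF q] by auto
  have "ipoly (palindromize n q) x = 0"
    using x y(2) ipoly_palindromize[OF q(1), of x] by simp
  moreover have "cmod t \<le> x" if t: "ipoly (palindromize n q) t = 0" for t :: complex
  proof -
    have "t \<noteq> 0"
      using t palindromic_coeff_0[OF pal lc] by (auto simp: ipoly_0)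
    then have "ipoly q (t + 1 / t) = 0"
      using t ipoly_palindromize[OF q(1), of t] by simp
    then consider "t + 1 / t = of_real y" | "cmod (t + 1 / t) + 1 \<le> x"
      using small unfolding x_def by blast
    then show ?thesis
    proof cases
      case 1
      then have "cmod t = x \<or> cmod t = 1 / x"
        using add_inverse_eq_trace_root[OF y(1) \<open>t \<noteq> 0\<close>] x(1) unfolding x_def
        by (auto simp del: of_real_divide)
      moreover have "1 / x < 1"
        using x(1) by simp
      ultimately show ?thesis
        using x(1) by linarith
    next
      case 2
      then show ?thesis
        using norm_le_norm_add_inverse[of t] by linarith
    qed
  qed
  ultimately show ?thesis
    unfolding monic_palindromic_leading_def x_def using pal lc by auto
qed

lemma trace_root_mem_B:
  fixes a :: "nat \<Rightarrow> int" and R :: real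
  assumes n: "2 \<le> n" and R: "5 \<le> R"
    and a1: "- (1 / 2 + eps n) * R \<le> of_int (a 1)" "of_int (a 1) \<le> - R / 2"
    and a: "\<And>k. k \<in> {2..n} \<Longrightarrow> \<bar>of_int (a k)\<bar> \<le> eps n * R ^ k"
  obtains y1 where "ipoly (monic_poly n a) y1 = 0" "2 < y1" "trace_root y1 \<in> B n R"
proof -
  obtain y1 where root: "ipoly (monic_poly n a) y1 = 0" and y1: "8 * R / 17 \<le> y1" "y1 \<le> R"
    and others: "\<And>y::complex. ipoly (monic_poly n a) y = 0 \<Longrightarrow> y = of_real y1 \<or> cmod y < rho n * R"
    using monic_poly_dominant_root[OF n _ a1 a] R by auto
  have "2 < y1"
    using y1 R by linarith
  note x = trace_root[OF this]
  have "rho n * R + 1 \<le> trace_root y1"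
  proof -
    have "rho n \<le> 1 / 16"
      using n unfolding rho_def by (simp add: field_simps)
    then have "rho n * R \<le> R / 16"
      using R by (simp add: mult_right_mono)
    then show ?thesis
      using x(3) y1 R by linarith
  qed
  then have "monic_palindromic_leading (trace_root y1) (palindromize n (monic_poly n a))"
  proof (intro leading_root_palindromize)
    fix z :: complex assume "ipoly (monic_poly n a) z = 0"
    then show "z = of_real y1 \<or> cmod z + 1 \<le> trace_root y1"
      using others[of z] \<open>rho n * R + 1 \<le> trace_root y1\<close> by auto
  qed (use root \<open>2 < y1\<close> in simp_all)
  moreover have "trace_root y1 \<le> R"
    using x(1,2) y1 by (smt (verit) divide_pos_pos)
  moreover have "degree (palindromize n (monic_poly n a)) \<le> 2 * n"
    using degree_palindromize(1)[of "monic_poly n a" n] by simp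
  ultimately have "trace_root y1 \<in> B n R"
    using mem_B_if_leading_root[OF x(1)] by blast
  with root \<open>2 < y1\<close> show thesis by (rule that)
qed

lemma card_residue_class_interval_ge:
  fixes m r :: int and L U :: real
  assumes m: "0 < m" and r: "0 \<le> r" "r < m" and UL: "2 * m \<le> U - L"
  shows "finite {a::int. a mod m = r \<and> L \<le> a \<and> a \<le> U}"
    and "(U - L) / (2 * m) \<le> card {a::int. a mod m = r \<and> L \<le> a \<and> a \<le> U}"
proof -
  define S where "S = {a::int. a mod m = r \<and> L \<le> a \<and> a \<le> U}"
  have "S \<subseteq> {\<lceil>L\<rceil>..\<lfloor>U\<rfloor>}"
    unfolding S_def by (auto simp: ceiling_le_iff le_floor_iff)
  then show fin: "finite {a::int. a mod m = r \<and> L \<le> a \<and> a \<le> U}"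
    unfolding S_def[symmetric] using finite_subset by blast
  have D: "2 \<le> (U - L) / m"
    using UL m by (simp add: pos_le_divide_eq)
  define lo where "lo = \<lceil>(L - r) / m\<rceil>"
  define hi where "hi = \<lfloor>(U - r) / m\<rfloor>"
  have "(\<lambda>j. m * j + r) ` {lo..hi} \<subseteq> S"
  proof (rule image_subsetI)
    fix j assume "j \<in> {lo..hi}"
    then have "(L - r) / m \<le> j" "j \<le> (U - r) / m"
      unfolding lo_def hi_def by (auto simp: ceiling_le_iff le_floor_iff)
    then have "L \<le> m * j + r" "m * j + r \<le> U"
      using m by (simp_all add: pos_divide_le_eq pos_le_divide_eq mult.commute)
    then show "m * j + r \<in> S"
      unfolding S_def using r by simp
  qed
  moreover have "inj_on (\<lambda>j. m * j + r) {lo..hi}"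
    using m by (simp add: inj_on_def)
  ultimately have "card {lo..hi} \<le> card S"
    using fin unfolding S_def[symmetric] by (metis card_image card_mono)
  moreover have "(U - L) / m - 1 \<le> real (card {lo..hi})"
  proof -
    have "of_int lo \<le> (L - r) / m + 1"
      unfolding lo_def by (rule of_int_ceiling_le_add_one)
    moreover have "(U - r) / m - 1 \<le> of_int hi"
      unfolding hi_def using floor_correct[of "(U - r) / m"] by linarith
    moreover have "(U - r) / m - (L - r) / m = (U - L) / m"
      by (simp add: diff_divide_distrib)
    ultimately show ?thesis
      using D by simp
  qed
  moreover have "(U - L) / (2 * m) = (U - L) / m / 2"
    by simp
  ultimately show "(U - L) / (2 * m) \<le> card {a::int. a mod m = r \<and> L \<le> a \<and> a \<le> U}"
    unfolding S_def using D by linarith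
qed

text \<open>Coefficient vectors in the following boxes give distinct elements of \<open>B n R\<close>; the
  conditions on parity and on \<open>a\<^sub>n mod 4\<close> make \<open>monic_poly n a\<close> Eisenstein at \<open>2\<close>.\<close>
definition coeff_range :: "nat \<Rightarrow> real \<Rightarrow> nat \<Rightarrow> int set" where
  "coeff_range n R k =
     (if k = 1 then {a. a mod 2 = 0 \<and> - (1 / 2 + eps n) * R \<le> a \<and> a \<le> - R / 2}
      else if k = n then {a. a mod 4 = 2 \<and> 0 \<le> a \<and> a \<le> eps n * R ^ k}
      else {a. a mod 2 = 0 \<and> 0 \<le> a \<and> a \<le> eps n * R ^ k})"

definition coeff_family :: "nat \<Rightarrow> real \<Rightarrow> (nat \<Rightarrow> int) set" where
  "coeff_family n R = (\<Pi>\<^sub>E k\<in>{1..n}. coeff_range n R k)"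

lemma card_coeff_range_ge:
  assumes n: "2 \<le> n" and R: "1 \<le> R" and eps: "8 \<le> eps n * R" and k: "k \<in> {1..n}"
  shows "finite (coeff_range n R k)" "eps n / 8 * R ^ k \<le> card (coeff_range n R k)"
proof -
  have "R ^ 1 \<le> R ^ k"
    using R k by (intro power_increasing) auto
  then have "eps n * R \<le> eps n * R ^ k"
    using eps_pos[of n] n by (intro mult_left_mono) auto
  then have eps_k: "8 \<le> eps n * R ^ k"
    using eps by linarith
  consider "k = 1" | "k \<noteq> 1" "k = n" | "k \<noteq> 1" "k \<noteq> n"
    by blast
  then have "finite (coeff_range n R k) \<and> eps n / 8 * R ^ k \<le> card (coeff_range n R k)"
  proof cases
    case 1
    define L where "L = - (1 / 2 + eps n) * R"
    define U where "U = - R / 2"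
    have range: "coeff_range n R k = {a. a mod 2 = 0 \<and> L \<le> a \<and> a \<le> U}"
      unfolding coeff_range_def 1 L_def U_def by simp
    have "U - L = eps n * R"
      unfolding L_def U_def by (simp add: algebra_simps)
    moreover have "2 * 2 \<le> U - L"
      using \<open>U - L = eps n * R\<close> eps by simp
    ultimately have "finite (coeff_range n R k) \<and> eps n * R / 4 \<le> card (coeff_range n R k)"
      unfolding range using card_residue_class_interval_ge[where m = 2 and r = 0 and L = L and U = U]
      by simp
    then show ?thesis
      using eps 1 by simp
  next
    case 2
    then show ?thesis
      using card_residue_class_interval_ge[where m = 4 and r = 2 and L = 0 and U = "eps n * R ^ k"] eps_k
      unfolding coeff_range_def by simp
  next
    case 3
    then show ?thesis
      using card_residue_class_interval_ge[where m = 2 and r = 0 and L = 0 and U = "eps n * R ^ k"] eps_k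
      unfolding coeff_range_def by simp
  qed
  then show "finite (coeff_range n R k)" "eps n / 8 * R ^ k \<le> card (coeff_range n R k)"
    by auto
qed

lemma card_coeff_family_ge:
  assumes "2 \<le> n" "1 \<le> R" "8 \<le> eps n * R"
  shows "(eps n / 8) ^ n * R ^ (n * (n + 1) div 2) \<le> card (coeff_family n R)"
proof -
  have "(\<Sum>k=1..n. k) = n * (n + 1) div 2"
    by (simp add: Sum_Icc_nat)
  then have "R ^ (n * (n + 1) div 2) = (\<Prod>k\<in>{1..n}. R ^ k)"
    using power_sum[of R "\<lambda>k. k" "{1..n}"] by simp
  then have "(eps n / 8) ^ n * R ^ (n * (n + 1) div 2) =
             (\<Prod>k\<in>{1..n}. eps n / 8) * (\<Prod>k\<in>{1..n}. R ^ k)"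
    by simp
  also have "\<dots> = (\<Prod>k\<in>{1..n}. eps n / 8 * R ^ k)"
    by (rule prod.distrib[symmetric])
  also have "\<dots> \<le> (\<Prod>k\<in>{1..n}. real (card (coeff_range n R k)))"
    using card_coeff_range_ge[OF assms] eps_pos[of n] assms by (intro prod_mono) auto
  also have "\<dots> = card (coeff_family n R)"
    unfolding coeff_family_def by (simp add: card_PiE)
  finally show ?thesis .
qed

lemma coeff_family_bounds:
  assumes "2 \<le> n" "a \<in> coeff_family n R"
  shows "- (1 / 2 + eps n) * R \<le> of_int (a 1)" "of_int (a 1) \<le> - R / 2"
    and "\<And>k. k \<in> {2..n} \<Longrightarrow> \<bar>of_int (a k)\<bar> \<le> eps n * R ^ k"
proof -
  have range: "a k \<in> coeff_range n R k" if "k \<in> {1..n}" for k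
    using assms(2) that unfolding coeff_family_def by auto
  show "- (1 / 2 + eps n) * R \<le> of_int (a 1)" "of_int (a 1) \<le> - R / 2"
    using range[of 1] assms(1) unfolding coeff_range_def by auto
  fix k assume k: "k \<in> {2..n}"
  then have "0 \<le> a k \<and> of_int (a k) \<le> eps n * R ^ k"
    using range[of k] unfolding coeff_range_def by (auto split: if_splits)
  then show "\<bar>of_int (a k)\<bar> \<le> eps n * R ^ k"
    by simp
qed

lemma irreducible\<^sub>d_monic_poly_coeff_family:
  assumes n: "2 \<le> n" and a: "a \<in> coeff_family n R"
  shows "irreducible\<^sub>d (monic_poly n a)"
proof (rule eisenstein_irreducible\<^sub>d[of 2])
  have range: "a k \<in> coeff_range n R k" if "k \<in> {1..n}" for k
    using a that unfolding coeff_family_def by auto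
  have even: "a k mod 2 = 0" if "k \<in> {1..n}" for k
    using range[OF that] unfolding coeff_range_def by (auto split: if_splits) presburger
  show "2 dvd coeff (monic_poly n a) j" if "j < degree (monic_poly n a)" for j
    using even[of "n - j"] that by (auto simp: coeff_monic_poly even_iff_mod_2_eq_zero)
  have "a n mod 4 = 2"
    using range[of n] n unfolding coeff_range_def by auto
  then show "\<not> 2\<^sup>2 dvd coeff (monic_poly n a) 0"
    using n by (simp add: coeff_monic_poly) presburger
qed (use n in simp_all)

lemma card_coeff_family_le_card_B:
  assumes n: "2 \<le> n" and R: "5 \<le> R"
  shows "card (coeff_family n R) \<le> card (B n R)"
proof -
  define y where
    "y a = (SOME y1. ipoly (monic_poly n a) y1 = 0 \<and> 2 < y1 \<and> trace_root y1 \<in> B n R)" for a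
  have y: "ipoly (monic_poly n a) (y a) = 0 \<and> 2 < y a \<and> trace_root (y a) \<in> B n R"
    if a: "a \<in> coeff_family n R" for a
  proof -
    obtain y1 where "ipoly (monic_poly n a) y1 = 0" "2 < y1" "trace_root y1 \<in> B n R"
      by (rule trace_root_mem_B[OF n R coeff_family_bounds[OF n a]])
    then have "\<exists>y1. ipoly (monic_poly n a) y1 = 0 \<and> 2 < y1 \<and> trace_root y1 \<in> B n R"
      by blast
    then show ?thesis
      unfolding y_def by (rule someI_ex)
  qed
  have "inj_on (\<lambda>a. trace_root (y a)) (coeff_family n R)"
  proof (rule inj_onI)
    fix a b assume a: "a \<in> coeff_family n R" and b: "b \<in> coeff_family n R"
      and "trace_root (y a) = trace_root (y b)"
    then have "y a = y b"
      using y trace_root(2) by metis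
    then have "monic_poly n a = monic_poly n b"
      using y[OF a] y[OF b] irreducible\<^sub>d_monic_poly_coeff_family[OF n] a b
      by (intro monic_irreducible\<^sub>d_common_root_eq[of _ _ "y a"]) (simp_all add: lead_coeff_monic_poly)
    then have coeff_eq: "coeff (monic_poly n a) (n - k) = coeff (monic_poly n b) (n - k)" for k
      by simp
    have "a k = b k" if "k \<in> {1..n}" for k
    proof -
      have "n - k < n" "n - (n - k) = k"
        using that by auto
      with coeff_eq[of k] show ?thesis
        by (simp add: coeff_monic_poly)
    qed
    then show "a = b"
      using a b unfolding coeff_family_def by (intro PiE_ext) auto
  qed
  moreover have "(\<lambda>a. trace_root (y a)) ` coeff_family n R \<subseteq> B n R"
    using y by blast
  moreover have "finite (B n R)"
    using card_B_le_card_bounded_palindromics(1) R by simp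
  ultimately show ?thesis
    by (rule card_inj_on_le)
qed


lemma card_B_upper_bound:
  assumes "1 \<le> R"
  shows "real (card (B n R)) \<le> (2 * real n + 1) * (3 * 4 ^ n) ^ (n + 1) * R ^ (n * (n + 1) div 2)"
  using card_B_le_card_bounded_palindromics(2)[OF assms, of n]
    card_bounded_palindromics_le(2)[OF assms, of n] of_nat_mono by fastforce

lemma card_B_lower_bound:
  assumes "2 \<le> n" "5 \<le> R" "8 \<le> eps n * R"
  shows "(eps n / 8) ^ n * R ^ (n * (n + 1) div 2) \<le> real (card (B n R))"
  using card_coeff_family_ge[of n R] card_coeff_family_le_card_B[of n R] assms of_nat_mono
  by fastforce

theorem lemma8:
  fixes n :: nat
  assumes "n \<ge> 2"
  shows "\<exists>C>0. \<forall>\<^sub>F R in at_top.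
     (1 / C) * R ^ (n * (n + 1) div 2) \<le> real (card (B n R)) \<and>
     real (card (B n R)) \<le> C * R ^ (n * (n + 1) div 2)"
proof -
  define N where "N = n * (n + 1) div 2"
  define C1 where "C1 = (2 * real n + 1) * (3 * 4 ^ n) ^ (n + 1)"
  define C2 where "C2 = (8 / eps n) ^ n"
  define C where "C = max C1 C2"
  have eps: "0 < eps n"
    using assms eps_pos by simp
  then have "0 < C2"
    unfolding C2_def by simp
  then have C: "0 < C" "C1 \<le> C" "1 / C \<le> 1 / C2"
    unfolding C_def by (auto intro!: divide_left_mono simp: less_max_iff_disj)
  have "\<forall>\<^sub>F R in at_top. 1 / C * R ^ N \<le> real (card (B n R)) \<and> real (card (B n R)) \<le> C * R ^ N"
    using eventually_ge_at_top[of "max 5 (8 / eps n)"]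
  proof eventually_elim
    case (elim R)
    then have R: "5 \<le> R" "8 \<le> eps n * R"
      using eps by (auto simp: field_simps)
    have "1 / C * R ^ N \<le> 1 / C2 * R ^ N" "C1 * R ^ N \<le> C * R ^ N"
      using C R by (intro mult_right_mono; simp)+
    moreover have "1 / C2 * R ^ N \<le> real (card (B n R))"
      using card_B_lower_bound[OF assms R] unfolding C2_def N_def by (simp add: power_divide)
    moreover have "real (card (B n R)) \<le> C1 * R ^ N"
      using card_B_upper_bound[of R n] R unfolding C1_def N_def by simp
    ultimately show ?case
      by linarith
  qed
  with C show ?thesis
    unfolding N_def by blast
qed

end
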